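(* Let $G$ be a bounded metric operator on $\mathcal H$ and $S$ a closed densely defined operator in $\mathcal H$. Define $K$ on $D(K)=G^{1/2}D(S)$ by $K\xi=G^{1/2}SG^{-1/2}\xi$. Then $K$ is densely defined and $K^*=G^{-1/2}S^*G^{1/2}$, where the latter operator has its natural domain $\{\eta\in\mathcal H: G^{1/2}\eta\in D(S^* ),\ S^*G^{1/2}\eta\in D(G^{-1/2})\}$.
   Context: A metric operator on a Hilbert space $\mathcal H$ is a self-adjoint operator $G$ with $\langle G\xi,\xi\rangle>0$ for all nonzero $\xi\in D(G)$; $G^{-1/2}$ denotes the (possibly unbounded) inverse of $G^{1/2}$, with domain the range of $G^{1/2}$. $S^*$ denotes the Hilbert space adjoint in $\mathcal H$. *)

theory Defs
  imports "HOL-Analysis.Analysis"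
begin

text \<open>HOL-Analysis has no complex inner product spaces, so we introduce a type class:
  a real normed vector space with a compatible complex scalar multiplication and a
  complex inner product (linear in the first, conjugate-linear in the second argument)
  inducing the norm. Together with complete_space this is a complex Hilbert space.\<close>

class complex_inner = real_normed_vector +
  fixes scaleC :: "complex \<Rightarrow> 'a \<Rightarrow> 'a"
    and cinner :: "'a \<Rightarrow> 'a \<Rightarrow> complex"
  assumes scaleC_scaleR: "scaleC (complex_of_real r) x = scaleR r x"
    and scaleC_add_right: "scaleC a (x + y) = scaleC a x + scaleC a y"
    and scaleC_add_left: "scaleC (a + b) x = scaleC a x + scaleC b x"
    and scaleC_scaleC: "scaleC a (scaleC b x) = scaleC (a * b) x"
    and scaleC_one: "scaleC 1 x = x"
    and cinner_conj: "cinner x y = cnj (cinner y x)"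
    and cinner_add_left: "cinner (x + y) z = cinner x z + cinner y z"
    and cinner_scaleC_left: "cinner (scaleC a x) y = a * cinner x y"
    and cinner_self_norm: "cinner x x = complex_of_real ((norm x)\<^sup>2)"

text \<open>A (possibly unbounded) operator is represented by its graph, a set of pairs.\<close>

definition graph_subspace :: "('a::complex_inner \<times> 'a) set \<Rightarrow> bool" where
  "graph_subspace T \<longleftrightarrow> (0, 0) \<in> T
     \<and> (\<forall>x y u v. (x, y) \<in> T \<longrightarrow> (u, v) \<in> T \<longrightarrow> (x + u, y + v) \<in> T)
     \<and> (\<forall>a x y. (x, y) \<in> T \<longrightarrow> (scaleC a x, scaleC a y) \<in> T)"

definition lin_op :: "('a::complex_inner \<times> 'a) set \<Rightarrow> bool" where
  "lin_op T \<longleftrightarrow> graph_subspace T \<and> single_valued T"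

definition densely_defined :: "('a::complex_inner \<times> 'a) set \<Rightarrow> bool" where
  "densely_defined T \<longleftrightarrow> closure (Domain T) = UNIV"

definition closed_op :: "('a::complex_inner \<times> 'a) set \<Rightarrow> bool" where
  "closed_op T \<longleftrightarrow> lin_op T \<and> closed T"

definition adjoint_op :: "('a::complex_inner \<times> 'a) set \<Rightarrow> ('a \<times> 'a) set" where
  "adjoint_op T = {(y, z). \<forall>x w. (x, w) \<in> T \<longrightarrow> cinner w y = cinner x z}"

definition gr :: "('a \<Rightarrow> 'a) \<Rightarrow> ('a \<times> 'a) set" where
  "gr f = {(x, f x) | x. True}"

definition bounded_clinear_op :: "('a::complex_inner \<Rightarrow> 'a) \<Rightarrow> bool" where
  "bounded_clinear_op f \<longleftrightarrow> (\<forall>x y. f (x + y) = f x + f y)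
     \<and> (\<forall>a x. f (scaleC a x) = scaleC a (f x))
     \<and> (\<exists>C. \<forall>x. norm (f x) \<le> C * norm x)"

definition self_adjoint_bounded :: "('a::complex_inner \<Rightarrow> 'a) \<Rightarrow> bool" where
  "self_adjoint_bounded f \<longleftrightarrow> bounded_clinear_op f \<and> (\<forall>x y. cinner (f x) y = cinner x (f y))"

definition bounded_metric_op :: "('a::complex_inner \<Rightarrow> 'a) \<Rightarrow> bool" where
  "bounded_metric_op G \<longleftrightarrow> self_adjoint_bounded G
     \<and> (\<forall>x. x \<noteq> 0 \<longrightarrow> Im (cinner (G x) x) = 0 \<and> Re (cinner (G x) x) > 0)"

definition is_pos_sqrt :: "('a::complex_inner \<Rightarrow> 'a) \<Rightarrow> ('a \<Rightarrow> 'a) \<Rightarrow> bool" where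
  "is_pos_sqrt G R \<longleftrightarrow> self_adjoint_bounded R
     \<and> (\<forall>x. Im (cinner (R x) x) = 0 \<and> Re (cinner (R x) x) \<ge> 0)
     \<and> (\<forall>x. R (R x) = G x)"

end

theory Submission
  imports Defs
begin

text \<open>\<open>K\<close> is the graph \<open>{(R y, R w) | (y, w) \<in> S}\<close>. Since \<open>R = G\<^sup>1\<^sup>/\<^sup>2\<close> is symmetric,
  \<open>\<langle>R w, y\<rangle> = \<langle>R x, z\<rangle>\<close> for all \<open>(x, w) \<in> S\<close> says exactly that \<open>(R y, R z) \<in> S\<^sup>*\<close>, which
  is the claimed formula for \<open>K\<^sup>*\<close>.\<close>

lemma cinner_add_right: "cinner x (y + z) = cinner x y + cinner x (z::'a::complex_inner)"
  by (metis cinner_conj cinner_add_left complex_cnj_add)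

lemma cinner_zero_left [simp]: "cinner 0 (y::'a::complex_inner) = 0"
  using cinner_add_left [of 0 0 y] by simp

lemma cinner_zero_right [simp]: "cinner x (0::'a::complex_inner) = 0"
  by (metis cinner_conj cinner_zero_left complex_cnj_zero)

lemma cinner_scaleR_right: "cinner x (t *\<^sub>R y) = of_real t * cinner x (y::'a::complex_inner)"
  by (metis cinner_conj cinner_scaleC_left scaleC_scaleR complex_cnj_complex_of_real complex_cnj_mult)

lemma power2_norm_eq_Re_cinner: "(norm x)\<^sup>2 = Re (cinner x (x::'a::complex_inner))"
  by (simp add: cinner_self_norm)

lemma power2_norm_add:
  "(norm (a + b))\<^sup>2 = (norm a)\<^sup>2 + 2 * Re (cinner a b) + (norm (b::'a::complex_inner))\<^sup>2"
proof -
  have "Re (cinner b a) = Re (cinner a b)"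
    by (subst cinner_conj) simp
  then show ?thesis
    by (simp add: power2_norm_eq_Re_cinner cinner_add_left cinner_add_right)
qed

lemma parallelogram_law:
  "(norm (a + b))\<^sup>2 + (norm (a - b))\<^sup>2 = 2 * (norm a)\<^sup>2 + 2 * (norm (b::'a::complex_inner))\<^sup>2"
proof -
  have "cinner a (- b) = - cinner a b"
    using cinner_add_right [of a b "- b"] by (simp add: eq_neg_iff_add_eq_0 add.commute)
  then show ?thesis
    using power2_norm_add [of a b] power2_norm_add [of a "- b"] by simp
qed

lemma power2_norm_diff_midpoint:
  fixes a b y :: "'a::complex_inner"
  shows "(norm (a - b))\<^sup>2
    = 2 * (norm (y - a))\<^sup>2 + 2 * (norm (y - b))\<^sup>2
      - 4 * (norm (y - ((1/2) *\<^sub>R a + (1/2) *\<^sub>R b)))\<^sup>2"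
proof -
  have "(y - a) + (y - b) = 2 *\<^sub>R (y - ((1/2) *\<^sub>R a + (1/2) *\<^sub>R b))"
    by (simp add: algebra_simps scaleR_2)
  then have "(norm ((y - a) + (y - b)))\<^sup>2 = 4 * (norm (y - ((1/2) *\<^sub>R a + (1/2) *\<^sub>R b)))\<^sup>2"
    by (simp add: power_mult_distrib)
  moreover have "norm ((y - a) - (y - b)) = norm (a - b)"
    by (simp add: norm_minus_commute)
  ultimately show ?thesis
    using parallelogram_law [of "y - a" "y - b"] by simp
qed

lemma Cauchy_if_power2_dist_bounded:
  fixes f :: "nat \<Rightarrow> 'a::real_normed_vector"
  assumes "\<And>m n. (norm (f m - f n))\<^sup>2 \<le> 2 / (real m + 1) + 2 / (real n + 1)"
  shows "Cauchy f"
proof (rule metric_CauchyI)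
  fix e :: real
  assume e: "e > 0"
  obtain N :: nat where N: "4 / e\<^sup>2 < real N + 1"
    by (meson reals_Archimedean2 add_strict_increasing less_add_one less_trans)
  have "4 / (real N + 1) < e\<^sup>2"
    using N e by (simp add: divide_less_eq mult.commute)
  show "\<exists>N. \<forall>m\<ge>N. \<forall>n\<ge>N. dist (f m) (f n) < e"
  proof (intro exI allI impI)
    fix m n
    assume "m \<ge> N" "n \<ge> N"
    then have "2 / (real m + 1) \<le> 2 / (real N + 1)" "2 / (real n + 1) \<le> 2 / (real N + 1)"
      by (simp_all add: frac_le)
    then have "(norm (f m - f n))\<^sup>2 < e\<^sup>2"
      using assms [of m n] \<open>4 / (real N + 1) < e\<^sup>2\<close> by simp
    then show "dist (f m) (f n) < e"
      using e by (simp add: dist_norm power_less_imp_less_base)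
  qed
qed

text \<open>A minimizing sequence is Cauchy by the parallelogram law; its limit is the nearest point.\<close>

lemma exists_nearest_point_closed_convex:
  fixes M :: "'a::{complex_inner,complete_space} set"
  assumes "closed M" "convex M" "M \<noteq> {}"
  shows "\<exists>m\<in>M. \<forall>m'\<in>M. norm (y - m) \<le> norm (y - m')"
proof -
  define D where "D = Inf ((\<lambda>m. (norm (y - m))\<^sup>2) ` M)"
  have bdd: "bdd_below ((\<lambda>m. (norm (y - m))\<^sup>2) ` M)"
    by (rule bdd_belowI [of _ 0]) auto
  have D_le: "D \<le> (norm (y - m))\<^sup>2" if "m \<in> M" for m
    unfolding D_def using bdd that by (simp add: cInf_lower)
  have "\<exists>m\<in>M. (norm (y - m))\<^sup>2 < D + 1 / (real n + 1)" for n
  proof -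
    have "Inf ((\<lambda>m. (norm (y - m))\<^sup>2) ` M) < D + 1 / (real n + 1)"
      unfolding D_def by simp
    then show ?thesis
      using \<open>M \<noteq> {}\<close> by (subst (asm) cInf_less_iff) (auto simp: bdd)
  qed
  then obtain f where f_in: "\<And>n. f n \<in> M"
    and f_near: "\<And>n. (norm (y - f n))\<^sup>2 < D + 1 / (real n + 1)"
    by metis
  have "Cauchy f"
  proof (rule Cauchy_if_power2_dist_bounded)
    fix a b
    have mid: "(1/2) *\<^sub>R f a + (1/2) *\<^sub>R f b \<in> M"
      using \<open>convex M\<close> f_in f_in by (rule convexD) auto
    have "(norm (f a - f b))\<^sup>2 \<le> 2 * (1 / (real a + 1)) + 2 * (1 / (real b + 1))"
      using D_le [OF mid] power2_norm_diff_midpoint [of "f a" "f b" y] f_near [of a] f_near [of b]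
      by linarith
    then show "(norm (f a - f b))\<^sup>2 \<le> 2 / (real a + 1) + 2 / (real b + 1)"
      by simp
  qed
  then obtain m where lim: "f \<longlonglongrightarrow> m"
    using Cauchy_convergent_iff convergent_def by blast
  have "m \<in> M"
    using \<open>closed M\<close> f_in lim closed_sequentially by blast
  have "(\<lambda>n. (norm (y - f n))\<^sup>2) \<longlonglongrightarrow> (norm (y - m))\<^sup>2"
    by (intro tendsto_intros lim)
  moreover have "(\<lambda>n. D + 1 / (real n + 1)) \<longlonglongrightarrow> D + 0"
    using LIMSEQ_inverse_real_of_nat_add [of 0]
    by (intro tendsto_intros) (simp add: inverse_eq_divide add.commute)
  ultimately have "(norm (y - m))\<^sup>2 \<le> D + 0"
    by (rule LIMSEQ_le) (use f_near less_imp_le in auto)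
  then show ?thesis
    using \<open>m \<in> M\<close> D_le by (metis add_0_right norm_ge_zero order_trans power2_le_imp_le)
qed

lemma Re_cinner_eq_0_if_norm_minimal:
  fixes v u :: "'a::complex_inner"
  assumes "\<And>t. norm v \<le> norm (v + t *\<^sub>R u)"
  shows "Re (cinner v u) = 0"
proof -
  define c where "c = Re (cinner v u)"
  define N where "N = (norm u)\<^sup>2"
  have "N \<ge> 0"
    unfolding N_def by simp
  have expand: "0 \<le> 2 * t * c + t\<^sup>2 * N" for t
  proof -
    have "(norm v)\<^sup>2 \<le> (norm (v + t *\<^sub>R u))\<^sup>2"
      using assms [of t] by (simp add: power_mono)
    then show ?thesis
      using power2_norm_add [of v "t *\<^sub>R u"]
      by (simp add: cinner_scaleR_right c_def N_def power_mult_distrib)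
  qed
  define s where "s = c / (N + 1)"
  have "c = s * (N + 1)"
    unfolding s_def using \<open>N \<ge> 0\<close> by simp
  \<comment> \<open>evaluating at \<open>t = -s\<close> gives \<open>0 \<le> -s\<^sup>2 (N + 2)\<close>\<close>
  then have "s\<^sup>2 * (N + 2) \<le> 0"
    using expand [of "-s"] by (simp add: algebra_simps power2_eq_square)
  then have "s = 0"
    using \<open>N \<ge> 0\<close> by (simp add: mult_le_0_iff)
  then show ?thesis
    using \<open>c = s * (N + 1)\<close> c_def by simp
qed

lemma subspace_closure:
  fixes S :: "'a::real_normed_vector set"
  assumes "subspace S"
  shows "subspace (closure S)"
proof (rule subspaceI)
  show "0 \<in> closure S"
    using assms closure_subset subspace_0 by blast
  show "x + y \<in> closure S" if "x \<in> closure S" "y \<in> closure S" for x y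
  proof -
    have "x + y \<in> closure S + closure S"
      using that by (simp add: set_plus_intro)
    also have "\<dots> \<subseteq> closure (S + S)"
      by (rule closure_sum)
    also have "\<dots> \<subseteq> closure S"
      by (rule closure_mono) (use assms subspace_sum_minimal in blast)
    finally show ?thesis .
  qed
  show "c *\<^sub>R x \<in> closure S" if "x \<in> closure S" for c x
  proof -
    have "c *\<^sub>R x \<in> closure ((*\<^sub>R) c ` S)"
      using that closure_scaleR by blast
    also have "\<dots> \<subseteq> closure S"
      by (rule closure_mono) (use assms subspace_scale in blast)
    finally show ?thesis .
  qed
qed

lemma closed_subspace_eq_UNIV_if_orthogonal_trivial:
  fixes M :: "'a::{complex_inner,complete_space} set"
  assumes "closed M" "subspace M"
    and orth: "\<And>v. (\<And>u. u \<in> M \<Longrightarrow> Re (cinner v u) = 0) \<Longrightarrow> v = 0"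
  shows "M = UNIV"
proof -
  have "y \<in> M" for y
  proof -
    have "M \<noteq> {}"
      using \<open>subspace M\<close> subspace_0 by blast
    then obtain m where "m \<in> M" and nearest: "\<And>m'. m' \<in> M \<Longrightarrow> norm (y - m) \<le> norm (y - m')"
      using exists_nearest_point_closed_convex [OF \<open>closed M\<close> subspace_imp_convex [OF \<open>subspace M\<close>]]
      by blast
    have "Re (cinner (y - m) u) = 0" if "u \<in> M" for u
    proof (rule Re_cinner_eq_0_if_norm_minimal)
      fix t
      have "m - t *\<^sub>R u \<in> M"
        using \<open>subspace M\<close> \<open>m \<in> M\<close> that by (simp add: subspace_diff subspace_scale)
      moreover have "y - (m - t *\<^sub>R u) = y - m + t *\<^sub>R u"
        by simp
      ultimately show "norm (y - m) \<le> norm (y - m + t *\<^sub>R u)"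
        using nearest by metis
    qed
    then have "y - m = 0"
      by (rule orth)
    then show ?thesis
      using \<open>m \<in> M\<close> by simp
  qed
  then show ?thesis
    by blast
qed

text \<open>A vector orthogonal to the range of \<open>R\<close> is orthogonal to \<open>R (R v)\<close>, so \<open>\<parallel>R v\<parallel>\<^sup>2 = 0\<close>.\<close>

lemma dense_range_if_symmetric_inj:
  fixes R :: "'a::{complex_inner,complete_space} \<Rightarrow> 'a"
  assumes "bounded_linear R" "inj R"
    and symm: "\<And>x y. cinner (R x) y = cinner x (R y)"
  shows "closure (range R) = UNIV"
proof (rule closed_subspace_eq_UNIV_if_orthogonal_trivial)
  show "subspace (closure (range R))"
    using assms(1) by (intro subspace_closure linear_subspace_image) (auto simp: bounded_linear.linear)
  fix v
  assume orth: "\<And>u. u \<in> closure (range R) \<Longrightarrow> Re (cinner v u) = 0"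
  have "R (R v) \<in> closure (range R)"
    by (rule closure_subset [THEN subsetD]) simp
  then have "Re (cinner v (R (R v))) = 0"
    by (rule orth)
  moreover have "cinner v (R (R v)) = cnj (cinner (R v) (R v))"
    using cinner_conj [of v "R (R v)"] symm [of "R v" v] by simp
  ultimately have "R v = 0"
    by (simp add: cinner_self_norm)
  then show "v = 0"
    using \<open>inj R\<close> linear_0 [OF bounded_linear.linear [OF assms(1)]] by (metis injD)
qed simp

lemma bounded_linear_if_bounded_clinear_op:
  assumes "bounded_clinear_op f"
  shows "bounded_linear f"
proof
  show "f (x + y) = f x + f y" for x y
    using assms unfolding bounded_clinear_op_def by blast
  show "f (t *\<^sub>R x) = t *\<^sub>R f x" for t x
    using assms unfolding bounded_clinear_op_def by (metis scaleC_scaleR)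
  show "\<exists>K. \<forall>x. norm (f x) \<le> norm x * K"
    using assms unfolding bounded_clinear_op_def by (metis mult.commute)
qed

lemma inj_pos_sqrt_metric_op:
  assumes "bounded_metric_op G" "is_pos_sqrt G R"
  shows "inj R"
proof -
  have "linear R"
    using assms(2) bounded_linear_if_bounded_clinear_op bounded_linear.linear
    unfolding is_pos_sqrt_def self_adjoint_bounded_def by blast
  have "v = 0" if "R v = 0" for v
  proof -
    have "G v = 0"
      using assms(2) that linear_0 [OF \<open>linear R\<close>] unfolding is_pos_sqrt_def by metis
    then show ?thesis
      using assms(1) unfolding bounded_metric_op_def by fastforce
  qed
  then show ?thesis
    using \<open>linear R\<close> by (simp add: linear_inj_iff_eq_0)
qed

lemma mem_conjugate_graph:
  "(a, b) \<in> converse (gr R) O S O gr R \<longleftrightarrow> (\<exists>y w. a = R y \<and> (y, w) \<in> S \<and> b = R w)"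
  unfolding gr_def by blast

lemma Domain_conjugate_graph: "Domain (converse (gr R) O S O gr R) = R ` Domain S"
  by (simp only: set_eq_iff Domain_iff mem_conjugate_graph) blast

lemma densely_defined_conjugate_graph:
  assumes "bounded_linear R" "closure (range R) = UNIV" "densely_defined S"
  shows "densely_defined (converse (gr R) O S O gr R)"
proof -
  have "R ` closure (Domain S) \<subseteq> closure (R ` Domain S)"
    using continuous_image_closure_subset [of UNIV R "Domain S"] linear_continuous_on [OF assms(1)]
    by simp
  then have "range R \<subseteq> closure (R ` Domain S)"
    using assms(3) unfolding densely_defined_def by simp
  then have "closure (range R) \<subseteq> closure (R ` Domain S)"
    by (simp add: closure_minimal)
  then show ?thesis
    using assms(2) unfolding densely_defined_def Domain_conjugate_graph by blast
qed

lemma adjoint_conjugate_graph: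
  assumes symm: "\<And>x y. cinner (R x) y = cinner x (R y)"
  shows "adjoint_op (converse (gr R) O S O gr R) = gr R O adjoint_op S O converse (gr R)"
proof (rule set_eqI, clarify)
  fix y z
  have "(y, z) \<in> adjoint_op (converse (gr R) O S O gr R)
      \<longleftrightarrow> (\<forall>a b. (a, b) \<in> S \<longrightarrow> cinner (R b) y = cinner (R a) z)"
    unfolding adjoint_op_def mem_conjugate_graph by blast
  also have "\<dots> \<longleftrightarrow> (R y, R z) \<in> adjoint_op S"
    unfolding adjoint_op_def by (simp add: symm)
  also have "\<dots> \<longleftrightarrow> (y, z) \<in> gr R O adjoint_op S O converse (gr R)"
    unfolding gr_def by blast
  finally show "(y, z) \<in> adjoint_op (converse (gr R) O S O gr R)
      \<longleftrightarrow> (y, z) \<in> gr R O adjoint_op S O converse (gr R)" .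
qed

theorem lemma3p5:
  fixes G R :: "'a::{complex_inner,complete_space} \<Rightarrow> 'a"
    and S :: "('a \<times> 'a) set"
  assumes "bounded_metric_op G"
    and "is_pos_sqrt G R"
    and "closed_op S"
    and "densely_defined S"
  defines "K \<equiv> converse (gr R) O S O gr R"
  shows "densely_defined K \<and> adjoint_op K = gr R O adjoint_op S O converse (gr R)"
proof
  have symm: "\<And>x y. cinner (R x) y = cinner x (R y)"
    and "bounded_linear R"
    using assms(2) bounded_linear_if_bounded_clinear_op
    unfolding is_pos_sqrt_def self_adjoint_bounded_def by blast+
  have "closure (range R) = UNIV"
    using dense_range_if_symmetric_inj \<open>bounded_linear R\<close> inj_pos_sqrt_metric_op [OF assms(1,2)] symm
    by blast
  then show "densely_defined K"
    unfolding K_def using densely_defined_conjugate_graph \<open>bounded_linear R\<close> assms(4) by blast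
  show "adjoint_op K = gr R O adjoint_op S O converse (gr R)"
    unfolding K_def using adjoint_conjugate_graph symm by blast
qed

end
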